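(* Let $G$ be a finite group, let $k \leq m(G)$, and let $s=(g_1,\dots,g_k)$ be an irredundant generating sequence for $G$. Suppose that for every corresponding collection $(M_1,\dots,M_k)$ of maximal subgroups in general position there exists $r \in \{1,\dots,k\}$ such that: (1) $M_r = \langle g_i : i \neq r\rangle$; (2) $m(M_r) = k-1$; (3) $M_r$ satisfies the replacement property. Then $s$ satisfies the replacement property.
   Context: For a finite group $G$, a finite sequence $s=(g_1,\dots,g_k)$ of elements of $G$ is an irredundant generating sequence if $\langle g_1,\dots,g_k\rangle = G$ and $g_i \notin \langle g_j : j \neq i\rangle$ for every $i$. $m(G)$ denotes the maximal length of an irredundant generating sequence of $G$. An irredundant generating sequence $s=(g_1,\dots,g_k)$ satisfies the replacement property if for every nontrivial $g \in G$ there is an index $i$ such that $(g_1,\dots,g_{i-1},g,g_{i+1},\dots,g_k)$ generates $G$ (not necessarily irredundantly); a group $H$ satisfies the replacement property if every irredundant generating sequence of $H$ of length $m(H)$ does. A collection of subgroups $\{H_i\}_{i \in I}$ is in general position if for every $j \in I$, $\bigcap_{i\in I} H_i$ is properly contained in $\bigcap_{i \in I\setminus\{j\}} H_i$. A corresponding collection of maximal subgroups for $s$ is a sequence $(M_1,\dots,M_k)$ of maximal subgroups of $G$ with $M_i \supseteq \langle g_j : j \neq i\rangle$ for each $i$. *)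

theory Defs
  imports "HOL-Algebra.Algebra"
begin

text \<open>Sequences are lists of group elements; index i ranges over 0..<length s.\<close>

definition others :: "'a list \<Rightarrow> nat \<Rightarrow> 'a set" where
  "others s i = {s ! j | j. j < length s \<and> j \<noteq> i}"

definition irredundant_gen_seq :: "('a, 'b) monoid_scheme \<Rightarrow> 'a list \<Rightarrow> bool" where
  "irredundant_gen_seq G s \<longleftrightarrow>
     set s \<subseteq> carrier G \<and> generate G (set s) = carrier G \<and>
     (\<forall>i < length s. s ! i \<notin> generate G (others s i))"

definition m_len :: "('a, 'b) monoid_scheme \<Rightarrow> nat" where
  "m_len G = Max {length s | s. irredundant_gen_seq G s}"

definition seq_replacement :: "('a, 'b) monoid_scheme \<Rightarrow> 'a list \<Rightarrow> bool" where
  "seq_replacement G s \<longleftrightarrow>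
     (\<forall>g \<in> carrier G. g \<noteq> \<one>\<^bsub>G\<^esub> \<longrightarrow>
        (\<exists>i < length s. generate G (set (s[i := g])) = carrier G))"

definition group_replacement :: "('a, 'b) monoid_scheme \<Rightarrow> bool" where
  "group_replacement H \<longleftrightarrow>
     (\<forall>s. irredundant_gen_seq H s \<and> length s = m_len H \<longrightarrow> seq_replacement H s)"

definition maximal_subgroup :: "'a set \<Rightarrow> ('a, 'b) monoid_scheme \<Rightarrow> bool" where
  "maximal_subgroup M G \<longleftrightarrow> subgroup M G \<and> M \<noteq> carrier G \<and>
     (\<forall>H. subgroup H G \<and> M \<subseteq> H \<longrightarrow> H = M \<or> H = carrier G)"

text \<open>Intersections are taken inside carrier G (empty intersection = G).\<close>
definition general_position :: "('a, 'b) monoid_scheme \<Rightarrow> 'a set list \<Rightarrow> bool" where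
  "general_position G Ms \<longleftrightarrow>
     (\<forall>j < length Ms. carrier G \<inter> (\<Inter>i \<in> {..<length Ms}. Ms ! i)
        \<subset> carrier G \<inter> (\<Inter>i \<in> {..<length Ms} - {j}. Ms ! i))"

definition corresponding_maximals :: "('a, 'b) monoid_scheme \<Rightarrow> 'a list \<Rightarrow> 'a set list \<Rightarrow> bool" where
  "corresponding_maximals G s Ms \<longleftrightarrow> length Ms = length s \<and>
     (\<forall>i < length s. maximal_subgroup (Ms ! i) G \<and> generate G (others s i) \<subseteq> Ms ! i)"

end

theory Submission
  imports Defs
begin

text \<open>Suppose some g \<noteq> 1 could replace no entry of s. Then every s[i := g] lies in a maximal
  subgroup M_i, and (M_1, ..., M_k) is a corresponding collection; it is automatically in general
  position, because s_j lies in every M_i with i \<noteq> j but not in M_j. The hypothesis yields r with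
  M_r = \<langle>g_i : i \<noteq> r\<rangle>. Deleting g_r from s gives an irredundant generating sequence of M_r of
  length m(M_r), and g \<in> M_r replaces one of its entries, say g_i. The resulting generators of M_r
  together with g_r all lie in \<langle>s[i := g]\<rangle>, which is therefore G: a contradiction.\<close>

lemma set_eq_insert_nth_others:
  assumes "i < length xs"
  shows "set xs = insert (xs ! i) (others xs i)"
  using assms unfolding others_def by (auto simp: in_set_conv_nth)

lemma set_list_update_eq_insert_others:
  assumes "i < length xs"
  shows "set (xs[i := x]) = insert x (others xs i)"
proof -
  have "others (xs[i := x]) i = others xs i"
    unfolding others_def by (metis length_list_update nth_list_update_neq)
  then show ?thesis
    using set_eq_insert_nth_others[of i "xs[i := x]"] assms by simp
qed

lemma others_subset_set: "others xs i \<subseteq> set xs"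
  unfolding others_def by auto

definition delete_at :: "nat \<Rightarrow> 'a list \<Rightarrow> 'a list" where
  "delete_at r xs = take r xs @ drop (Suc r) xs"

lemma length_delete_at: "r < length xs \<Longrightarrow> length (delete_at r xs) = length xs - 1"
  unfolding delete_at_def by simp

lemma nth_delete_at:
  assumes "r < length xs" "j < length xs - 1"
  shows "delete_at r xs ! j = xs ! (if j < r then j else Suc j)"
  using assms unfolding delete_at_def by (simp add: nth_append min_def)

lemma lessThan_Diff_singleton_eq_image:
  assumes "r < n"
  shows "{..<n} - {r} = (\<lambda>j. if j < r then j else Suc j) ` {..<n - 1}"
proof
  show "(\<lambda>j. if j < r then j else Suc j) ` {..<n - 1} \<subseteq> {..<n} - {r}" using assms by auto
  show "{..<n} - {r} \<subseteq> (\<lambda>j. if j < r then j else Suc j) ` {..<n - 1}"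
  proof
    fix i assume i: "i \<in> {..<n} - {r}"
    show "i \<in> (\<lambda>j. if j < r then j else Suc j) ` {..<n - 1}"
    proof (cases "i < r")
      case True then show ?thesis using assms by (intro image_eqI[of _ _ i]) auto
    next
      case False then show ?thesis using i by (intro image_eqI[of _ _ "i - 1"]) auto
    qed
  qed
qed

lemma others_eq_image: "others xs r = (\<lambda>j. xs ! j) ` ({..<length xs} - {r})"
  unfolding others_def by auto

lemma set_delete_at:
  assumes "r < length xs"
  shows "set (delete_at r xs) = others xs r"
proof -
  have "others xs r = (\<lambda>j. delete_at r xs ! j) ` {..<length xs - 1}"
    unfolding others_eq_image lessThan_Diff_singleton_eq_image[OF assms] image_image
    using assms by (auto simp: nth_delete_at intro!: image_cong)
  then show ?thesis
    using assms by (auto simp: length_delete_at set_conv_nth)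
qed

lemma delete_at_nth_others:
  assumes "r < length xs" "j < length (delete_at r xs)"
  obtains i where "i < length xs" "i \<noteq> r" "delete_at r xs ! j = xs ! i"
    "others (delete_at r xs) j \<subseteq> others xs i"
proof
  let ?skip = "\<lambda>j. if j < r then j else Suc j"
  have j: "j < length xs - 1" using assms by (simp add: length_delete_at)
  show "?skip j < length xs" "?skip j \<noteq> r" using j by auto
  show "delete_at r xs ! j = xs ! ?skip j" using assms(1) j by (rule nth_delete_at)
  have "others (delete_at r xs) j = (\<lambda>i. xs ! ?skip i) ` ({..<length xs - 1} - {j})"
    unfolding others_eq_image using assms(1) by (auto simp: length_delete_at nth_delete_at)
  also have "\<dots> = (\<lambda>i. xs ! i) ` (?skip ` ({..<length xs - 1} - {j}))"
    by (simp only: image_image)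
  also have "\<dots> \<subseteq> (\<lambda>i. xs ! i) ` ({..<length xs} - {?skip j})"
    by (rule image_mono) (auto split: if_splits)
  finally show "others (delete_at r xs) j \<subseteq> others xs (?skip j)"
    unfolding others_eq_image .
qed

lemma (in group) generate_eq_carrierI:
  assumes "generate G A = carrier G" "B \<subseteq> carrier G" "A \<subseteq> generate G B"
  shows "generate G B = carrier G"
  using generate_subgroup_incl[OF assms(3) generate_is_subgroup[OF assms(2)]] generate_incl assms
  by blast

lemma (in group) exists_maximal_subgroup:
  assumes "finite (carrier G)" "subgroup K G" "K \<noteq> carrier G"
  obtains M where "maximal_subgroup M G" "K \<subseteq> M"
proof -
  define S where "S = {H. subgroup H G \<and> K \<subseteq> H \<and> H \<noteq> carrier G}"
  have "S \<subseteq> Pow (carrier G)" unfolding S_def using subgroup.subset by blast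
  then have "finite S" using assms(1) by (meson finite_Pow_iff finite_subset)
  moreover have "K \<in> S" using assms by (simp add: S_def)
  ultimately obtain M where M: "M \<in> S" "K \<subseteq> M" "\<And>H. H \<in> S \<Longrightarrow> M \<subseteq> H \<Longrightarrow> M = H"
    using finite_has_maximal2 by metis
  have "maximal_subgroup M G"
    unfolding maximal_subgroup_def using M by (auto simp: S_def)
  then show ?thesis using M(2) that by blast
qed

lemma corresponding_maximals_general_position:
  assumes "group G" "irredundant_gen_seq G s" "corresponding_maximals G s Ms"
  shows "general_position G Ms"
  unfolding general_position_def
proof (intro allI impI)
  interpret group G by fact
  have len: "length Ms = length s" using assms(3) by (simp add: corresponding_maximals_def)
  have Ms: "maximal_subgroup (Ms ! i) G" "others s i \<subseteq> Ms ! i" if "i < length s" for i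
    using assms(3) that generate.incl[of _ "others s i" G]
    unfolding corresponding_maximals_def by blast+
  fix j assume "j < length Ms"
  then have j: "j < length s" using len by simp
  have "s ! j \<in> Ms ! i" if "i \<in> {..<length Ms} - {j}" for i
    using Ms(2)[of i] that j len unfolding others_def by auto
  moreover have "s ! j \<in> carrier G"
    using assms(2) j unfolding irredundant_gen_seq_def by auto
  moreover have "s ! j \<notin> Ms ! j"
  proof
    assume "s ! j \<in> Ms ! j"
    then have "set s \<subseteq> Ms ! j" using set_eq_insert_nth_others[OF j] Ms(2)[OF j] by auto
    moreover have "subgroup (Ms ! j) G" "Ms ! j \<noteq> carrier G"
      using Ms(1)[OF j] unfolding maximal_subgroup_def by auto
    ultimately have "carrier G \<subseteq> Ms ! j"
      using assms(2) generate_subgroup_incl unfolding irredundant_gen_seq_def by metis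
    then show False
      using subgroup.subset[OF \<open>subgroup (Ms ! j) G\<close>] \<open>Ms ! j \<noteq> carrier G\<close> by blast
  qed
  ultimately show "carrier G \<inter> (\<Inter>i \<in> {..<length Ms}. Ms ! i)
      \<subset> carrier G \<inter> (\<Inter>i \<in> {..<length Ms} - {j}. Ms ! i)"
    using \<open>j < length Ms\<close> by blast
qed

lemma irredundant_gen_seq_delete_at:
  assumes "group G" "irredundant_gen_seq G s" "r < length s"
  shows "irredundant_gen_seq (G\<lparr>carrier := generate G (others s r)\<rparr>) (delete_at r s)"
  unfolding irredundant_gen_seq_def
proof (intro conjI allI impI)
  interpret group G by fact
  let ?H = "generate G (others s r)" and ?t = "delete_at r s"
  have "others s r \<subseteq> carrier G"
    using assms(2) others_subset_set[of s r] unfolding irredundant_gen_seq_def by blast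
  then have H: "subgroup ?H G" by (rule generate_is_subgroup)
  have t_H: "set ?t \<subseteq> ?H"
    using set_delete_at[OF assms(3)] generate.incl[of _ "others s r" G] by blast
  then show "set ?t \<subseteq> carrier (G\<lparr>carrier := ?H\<rparr>)" by simp
  show "generate (G\<lparr>carrier := ?H\<rparr>) (set ?t) = carrier (G\<lparr>carrier := ?H\<rparr>)"
    using generate_consistent[OF t_H H] set_delete_at[OF assms(3)] by simp
  fix j assume j: "j < length ?t"
  obtain i where i: "i < length s" "i \<noteq> r" "?t ! j = s ! i" "others ?t j \<subseteq> others s i"
    by (rule delete_at_nth_others[OF assms(3) j])
  have "others ?t j \<subseteq> ?H" using others_subset_set[of ?t j] t_H by blast
  then have "generate (G\<lparr>carrier := ?H\<rparr>) (others ?t j) = generate G (others ?t j)"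
    using H by (rule generate_consistent)
  also have "\<dots> \<subseteq> generate G (others s i)" using mono_generate[OF i(4)] .
  finally show "?t ! j \<notin> generate (G\<lparr>carrier := ?H\<rparr>) (others ?t j)"
    using assms(2) i(1,3) unfolding irredundant_gen_seq_def by auto
qed

lemma generating_update_if_others_replacement:
  assumes "group G" "irredundant_gen_seq G s" "r < length s"
    and "m_len (G\<lparr>carrier := generate G (others s r)\<rparr>) = length s - 1"
    and "group_replacement (G\<lparr>carrier := generate G (others s r)\<rparr>)"
    and "g \<in> generate G (others s r)" "g \<noteq> \<one>\<^bsub>G\<^esub>"
  shows "\<exists>i < length s. generate G (set (s[i := g])) = carrier G"
proof -
  interpret group G by fact
  let ?H = "generate G (others s r)" and ?t = "delete_at r s"
  have s_G: "set s \<subseteq> carrier G" and gen: "generate G (set s) = carrier G"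
    using assms(2) unfolding irredundant_gen_seq_def by auto
  have others_G: "others s r \<subseteq> carrier G" using others_subset_set[of s r] s_G by blast
  have H: "subgroup ?H G" using generate_is_subgroup[OF others_G] .
  have others_H: "others s r \<subseteq> ?H" using generate.incl[of _ "others s r" G] by blast
  have "seq_replacement (G\<lparr>carrier := ?H\<rparr>) ?t"
    using assms irredundant_gen_seq_delete_at[OF assms(1-3)]
    by (simp add: group_replacement_def length_delete_at)
  then obtain j where j: "j < length ?t"
    and gen_H: "generate (G\<lparr>carrier := ?H\<rparr>) (set (?t[j := g])) = ?H"
    using assms(6,7) unfolding seq_replacement_def by auto
  obtain i where i: "i < length s" "i \<noteq> r" "?t ! j = s ! i" "others ?t j \<subseteq> others s i"
    by (rule delete_at_nth_others[OF assms(3) j])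
  have upd_t: "set (?t[j := g]) = insert g (others ?t j)"
    using set_list_update_eq_insert_others[OF j] .
  have upd_s: "set (s[i := g]) = insert g (others s i)"
    using set_list_update_eq_insert_others[OF i(1)] .
  have "others ?t j \<subseteq> others s r"
    using others_subset_set[of ?t j] unfolding set_delete_at[OF assms(3)] .
  then have "set (?t[j := g]) \<subseteq> ?H"
    unfolding upd_t using assms(6) others_H by blast
  then have "?H = generate G (set (?t[j := g]))"
    using gen_H generate_consistent[OF _ H] by simp
  also have "\<dots> \<subseteq> generate G (set (s[i := g]))"
    using upd_s upd_t i(4) by (intro mono_generate) blast
  finally have "others s r \<subseteq> generate G (set (s[i := g]))" using others_H by blast
  moreover have "s ! r \<in> generate G (set (s[i := g]))"
  proof (rule generate.incl)
    show "s ! r \<in> set (s[i := g])" using upd_s i(2) assms(3) unfolding others_def by auto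
  qed
  ultimately have "set s \<subseteq> generate G (set (s[i := g]))"
    using set_eq_insert_nth_others[OF assms(3)] by simp
  moreover have "set (s[i := g]) \<subseteq> carrier G"
    using s_G assms(6) generate_incl[OF others_G] by (intro set_update_subsetI) auto
  ultimately show ?thesis using generate_eq_carrierI[OF gen] i(1) by blast
qed

lemma corresponding_maximals_containing:
  assumes "group G" "finite (carrier G)" "irredundant_gen_seq G s" "g \<in> carrier G"
    and "\<And>i. i < length s \<Longrightarrow> generate G (set (s[i := g])) \<noteq> carrier G"
  obtains Ms where "corresponding_maximals G s Ms" "\<And>i. i < length s \<Longrightarrow> g \<in> Ms ! i"
proof -
  interpret group G by fact
  have upd_G: "set (s[i := g]) \<subseteq> carrier G" for i
    using assms(3,4) unfolding irredundant_gen_seq_def by (simp add: set_update_subsetI)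
  have maximal_above:
    "\<exists>M. maximal_subgroup M G \<and> generate G (set (s[i := g])) \<subseteq> M" if i: "i < length s" for i
  proof -
    obtain M where "maximal_subgroup M G" "generate G (set (s[i := g])) \<subseteq> M"
      using exists_maximal_subgroup[OF assms(2) generate_is_subgroup[OF upd_G] assms(5)[OF i]] .
    then show ?thesis by blast
  qed
  define M where "M i = (SOME M. maximal_subgroup M G \<and> generate G (set (s[i := g])) \<subseteq> M)" for i
  have M: "maximal_subgroup (M i) G" "generate G (set (s[i := g])) \<subseteq> M i" if "i < length s" for i
    unfolding M_def using someI_ex[OF maximal_above[OF that]] by blast+
  have upd: "set (s[i := g]) = insert g (others s i)" if "i < length s" for i
    using set_list_update_eq_insert_others[OF that] .
  show ?thesis
  proof
    have "generate G (others s i) \<subseteq> M i" if "i < length s" for i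
      using mono_generate[of "others s i" "set (s[i := g])"] upd[OF that] M(2)[OF that] by blast
    then show "corresponding_maximals G s (map M [0..<length s])"
      unfolding corresponding_maximals_def using M(1) by simp
    show "g \<in> map M [0..<length s] ! i" if "i < length s" for i
      using M(2)[OF that] generate.incl[of g "set (s[i := g])" G] upd[OF that] that by auto
  qed
qed

theorem proposition3p2:
  fixes G :: "('a, 'b) monoid_scheme" and s :: "'a list" and k :: nat
  assumes "group G" and "finite (carrier G)"
    and "k = length s" and "k \<le> m_len G"
    and "irredundant_gen_seq G s"
    and "\<forall>Ms. corresponding_maximals G s Ms \<and> general_position G Ms \<longrightarrow>
           (\<exists>r < k. Ms ! r = generate G (others s r)
                  \<and> m_len (G\<lparr>carrier := Ms ! r\<rparr>) = k - 1
                  \<and> group_replacement (G\<lparr>carrier := Ms ! r\<rparr>))"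
  shows "seq_replacement G s"
  unfolding seq_replacement_def
proof (intro ballI impI, rule ccontr)
  fix g assume g: "g \<in> carrier G" "g \<noteq> \<one>\<^bsub>G\<^esub>"
    and no_update: "\<not> (\<exists>i < length s. generate G (set (s[i := g])) = carrier G)"
  then obtain Ms where cm: "corresponding_maximals G s Ms"
    and g_in: "\<And>i. i < length s \<Longrightarrow> g \<in> Ms ! i"
    using corresponding_maximals_containing[OF assms(1,2,5)] by blast
  then obtain r where r: "r < k" "Ms ! r = generate G (others s r)"
    "m_len (G\<lparr>carrier := Ms ! r\<rparr>) = k - 1" "group_replacement (G\<lparr>carrier := Ms ! r\<rparr>)"
    using assms(6) corresponding_maximals_general_position[OF assms(1,5)] by blast
  have "\<exists>i < length s. generate G (set (s[i := g])) = carrier G"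
    using generating_update_if_others_replacement[OF assms(1,5)] r g g_in[of r] assms(3) by auto
  with no_update show False ..
qed

end
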